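(* Let $Z\subset\mathbb{S}_2$ be a finite nonempty set of points. Then the following are equivalent: (i) $Z=\{Q\}$ for a single point $Q\in(E_1\cup E_2)\setminus\widetilde{L_{12}}$; (ii) $\alpha(Z)=\alpha(2Z)=\alpha(3Z)=\alpha(4Z)=1$ and $\alpha(5Z)>1$.
   Context: Let $P_1,P_2\in\mathbb{P}^2(\mathbb{C})$ be two general (distinct) points and $f\colon\mathbb{S}_2\to\mathbb{P}^2$ the blow-up at them, with exceptional curves $E_i=f^{-1}(P_i)$; let $H$ be the pullback of the class of a line and $\mathbb{L}_2=3H-E_1-E_2=-K_{\mathbb{S}_2}$. $L_{12}$ is the line through $P_1,P_2$ and $\widetilde{L_{12}}$ its proper transform in $\mathbb{S}_2$. For a finite set $Z\subset\mathbb{S}_2$ with ideal sheaf $\mathcal{I}_Z$ and a positive integer $m$, $\alpha(mZ)=\min\{d\ge 0:\ H^0(\mathbb{S}_2,d\mathbb{L}_2\otimes\mathcal{I}_Z^{(m)})\neq 0\}$, i.e. the least $d$ such that some effective divisor $D\in|d\mathbb{L}_2|$ has multiplicity at least $m$ at every point of $Z$. *)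

theory Defs
  imports "HOL-Analysis.Analysis"
begin

text \<open>Coordinates: P1 = [1:0:0], P2 = [0:1:0], so the line L12 is z = 0.
  Points of P^2 are represented by normalized representatives in C^3 (first nonzero
  coordinate equal to 1), points of P^1 (directions) by normalized pairs.\<close>

type_synonym c3 = "complex \<times> complex \<times> complex"

definition normP2 :: "c3 \<Rightarrow> bool" where
  "normP2 p \<longleftrightarrow> (case p of (x, y, z) \<Rightarrow>
      x = 1 \<or> (x = 0 \<and> y = 1) \<or> (x = 0 \<and> y = 0 \<and> z = 1))"

definition normP1 :: "complex \<times> complex \<Rightarrow> bool" where
  "normP1 w \<longleftrightarrow> (case w of (b, c) \<Rightarrow> b = 1 \<or> (b = 0 \<and> c = 1))"

definition P1 :: c3 where "P1 = (1, 0, 0)"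
definition P2 :: c3 where "P2 = (0, 1, 0)"

text \<open>Points of the blow-up S_2: points of P^2 other than P1, P2, and points of the
  exceptional curves E1, E2 (tangent directions at P1, P2).\<close>
datatype s2pt = Pt c3 | Ex1 "complex \<times> complex" | Ex2 "complex \<times> complex"

definition S2 :: "s2pt set" where
  "S2 = {Pt p | p. normP2 p \<and> p \<noteq> P1 \<and> p \<noteq> P2}
        \<union> {Ex1 w | w. normP1 w} \<union> {Ex2 w | w. normP1 w}"

definition E1 :: "s2pt set" where "E1 = {Ex1 w | w. normP1 w}"
definition E2 :: "s2pt set" where "E2 = {Ex2 w | w. normP1 w}"

text \<open>Proper transform of the line z = 0 through P1, P2: its points off P1, P2 and the
  points of E1, E2 corresponding to the direction of L12 at P1 (resp. P2).\<close>
definition L12t :: "s2pt set" where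
  "L12t = {Pt p | p. normP2 p \<and> p \<noteq> P1 \<and> p \<noteq> P2 \<and> snd (snd p) = 0}
          \<union> {Ex1 (1, 0), Ex2 (1, 0)}"

definition hom_eval :: "nat \<Rightarrow> (nat \<Rightarrow> nat \<Rightarrow> complex) \<Rightarrow> c3 \<Rightarrow> complex" where
  "hom_eval n c p = (case p of (x, y, z) \<Rightarrow>
      (\<Sum>i\<le>n. \<Sum>j\<le>n - i. c i j * x ^ i * y ^ j * z ^ (n - i - j)))"

definition hom_nonzero :: "nat \<Rightarrow> (nat \<Rightarrow> nat \<Rightarrow> complex) \<Rightarrow> bool" where
  "hom_nonzero n c \<longleftrightarrow> (\<exists>i j. i + j \<le> n \<and> c i j \<noteq> 0)"

text \<open>A function g (a local equation, centred at the point 0) vanishes to order at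
  least m at 0, i.e. has multiplicity at least m there.\<close>
definition ord_ge :: "('a::real_normed_vector \<Rightarrow> complex) \<Rightarrow> nat \<Rightarrow> bool" where
  "ord_ge g m \<longleftrightarrow> (\<exists>C. eventually (\<lambda>h. norm (g h) \<le> C * norm h ^ m) (at 0))"

definition smul3 :: "complex \<Rightarrow> c3 \<Rightarrow> c3" where
  "smul3 a p = (case p of (x, y, z) \<Rightarrow> (a * x, a * y, a * z))"

text \<open>Direction vectors at P1 / P2 for a normalized direction (b,c), and a complementary
  vector used for the standard blow-up chart.\<close>
definition dir1 :: "complex \<times> complex \<Rightarrow> c3" where "dir1 w = (0, fst w, snd w)"
definition cmp1 :: "complex \<times> complex \<Rightarrow> c3" where
  "cmp1 w = (if fst w = 1 then (0, 0, 1) else (0, 1, 0))"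
definition dir2 :: "complex \<times> complex \<Rightarrow> c3" where "dir2 w = (fst w, 0, snd w)"
definition cmp2 :: "complex \<times> complex \<Rightarrow> c3" where
  "cmp2 w = (if fst w = 1 then (0, 0, 1) else (1, 0, 0))"

text \<open>Multiplicity (at least m) at a point Q of S_2 of the divisor
  D = f^*C - d E1 - d E2 in |d L_2| given by the form F of degree 3d.
  Off E1, E2 this is the multiplicity of the curve C = (F = 0) (computed on the cone,
  which has the same multiplicity at a nonzero point); on E_i we use the standard
  blow-up chart (s,t) -> P_i + s (w + t u) and the local equation F(...)/s^d.\<close>
fun mult_ge :: "nat \<Rightarrow> (nat \<Rightarrow> nat \<Rightarrow> complex) \<Rightarrow> s2pt \<Rightarrow> nat \<Rightarrow> bool" where
  "mult_ge d c (Pt p) m = ord_ge (\<lambda>h. hom_eval (3 * d) c (p + h)) m"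
| "mult_ge d c (Ex1 w) m = ord_ge (\<lambda>(s, t).
      hom_eval (3 * d) c (P1 + smul3 s (dir1 w) + smul3 (s * t) (cmp1 w)) / s ^ d) m"
| "mult_ge d c (Ex2 w) m = ord_ge (\<lambda>(s, t).
      hom_eval (3 * d) c (P2 + smul3 s (dir2 w) + smul3 (s * t) (cmp2 w)) / s ^ d) m"

text \<open>Nonzero sections of d L_2 = 3dH - dE1 - dE2: nonzero forms of degree 3d with
  multiplicity at least d at P1 and P2.\<close>
definition section_dL :: "nat \<Rightarrow> (nat \<Rightarrow> nat \<Rightarrow> complex) \<Rightarrow> bool" where
  "section_dL d c \<longleftrightarrow> hom_nonzero (3 * d) c
      \<and> ord_ge (\<lambda>h. hom_eval (3 * d) c (P1 + h)) d
      \<and> ord_ge (\<lambda>h. hom_eval (3 * d) c (P2 + h)) d"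

definition alpha :: "nat \<Rightarrow> s2pt set \<Rightarrow> nat" where
  "alpha m Z = (LEAST d. \<exists>c. section_dL d c \<and> (\<forall>Q\<in>Z. mult_ge d c Q m))"

end

theory Submission
  imports Defs
begin

(* A cubic through P1 and P2 (a section of L_2) with multiplicity at least 4 at the point of E1
   of direction w is a cone over P1 of the form l_w^2 * (a linear form in y, z), l_w being the
   line through P1 in direction w; multiplicity 5 forces it to be a multiple of l_w^3, which
   passes through P2 only if w is the direction of L12. Comparing such factorisations shows that
   no nonzero cubic has multiplicity 4 at a point off E1 and E2, or at two points of E1 and E2 one
   of which is off L12, or multiplicity 5 at a point of E1 or E2 off L12. Conversely z l_w^2 and
   z^2 l_w^4 have multiplicities 4 and 8 at that point, and z^3 has multiplicity 5 at both points
   of E1 and E2 on L12. The symmetry exchanging x and y reduces E2 to E1. *)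

section \<open>Vanishing order at the origin\<close>

lemma ord_ge_mono:
  assumes "ord_ge g m" "m' \<le> m"
  shows "ord_ge g m'"
proof -
  obtain C where ev: "eventually (\<lambda>h. norm (g h) \<le> C * norm h ^ m) (at 0)"
    using assms(1) unfolding ord_ge_def by blast
  have small: "eventually (\<lambda>h. norm h < 1) (at (0::'a))"
    by (auto simp: eventually_at dist_norm intro!: exI[of _ 1])
  have "eventually (\<lambda>h. norm (g h) \<le> max C 0 * norm h ^ m') (at 0)"
    using ev small
  proof eventually_elim
    case (elim h)
    have "norm h ^ m \<le> norm h ^ m'"
      using elim(2) assms(2) by (simp add: power_decreasing)
    then have "C * norm h ^ m \<le> max C 0 * norm h ^ m'"
      by (meson max.cobounded1 max.cobounded2 mult_mono norm_ge_zero order_trans zero_le_power mult_right_mono)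
    then show ?case using elim(1) by linarith
  qed
  then show ?thesis unfolding ord_ge_def by blast
qed

lemma ord_ge_cong:
  assumes "ord_ge f m" "eventually (\<lambda>h. f h = g h) (at 0)"
  shows "ord_ge g m"
proof -
  obtain C where "eventually (\<lambda>h. norm (f h) \<le> C * norm h ^ m) (at 0)"
    using assms(1) unfolding ord_ge_def by blast
  with assms(2) have "eventually (\<lambda>h. norm (g h) \<le> C * norm h ^ m) (at 0)"
    by eventually_elim simp
  then show ?thesis unfolding ord_ge_def by blast
qed

lemma ord_ge_compose:
  fixes g :: "'a::real_normed_vector \<Rightarrow> complex" and \<phi> :: "'b::real_normed_vector \<Rightarrow> 'a"
  assumes "ord_ge g m" "\<And>x. norm (\<phi> x) = K * norm x" "K > 0"
  shows "ord_ge (\<lambda>x. g (\<phi> x)) m"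
proof -
  obtain C where ev: "eventually (\<lambda>h. norm (g h) \<le> C * norm h ^ m) (at 0)"
    using assms(1) unfolding ord_ge_def by blast
  have "((\<lambda>x. norm (\<phi> x)) \<longlongrightarrow> 0) (at 0)"
    unfolding assms(2) by (auto intro!: tendsto_eq_intros)
  moreover have "eventually (\<lambda>x. \<phi> x \<noteq> 0) (at 0)"
    using assms(2,3) by (auto simp: eventually_at_filter intro!: always_eventually)
      (metis mult_eq_0_iff norm_eq_zero order_less_irrefl)
  ultimately have "filterlim \<phi> (at 0) (at 0)"
    by (simp add: filterlim_at tendsto_norm_zero_iff)
  from eventually_compose_filterlim[OF ev this]
  have "eventually (\<lambda>x. norm (g (\<phi> x)) \<le> (C * K ^ m) * norm x ^ m) (at 0)"
    by eventually_elim (simp add: assms(2) power_mult_distrib algebra_simps)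
  then show ?thesis unfolding ord_ge_def by blast
qed

lemma ord_ge_imp_eq_0:
  fixes g :: "'a::euclidean_space \<Rightarrow> complex"
  assumes "ord_ge g m" "m \<ge> 1" "isCont g 0"
  shows "g 0 = 0"
proof -
  obtain C where ev: "eventually (\<lambda>h. norm (g h) \<le> C * norm h ^ m) (at 0)"
    using assms(1) unfolding ord_ge_def by blast
  have "((\<lambda>h. C * norm h ^ m) \<longlongrightarrow> 0) (at (0::'a))"
    using assms(2) by (auto intro!: tendsto_eq_intros)
  from Lim_null_comparison[OF ev this] have "(g \<longlongrightarrow> 0) (at 0)" .
  moreover have "(g \<longlongrightarrow> g 0) (at 0)"
    using assms(3) by (simp add: isCont_def)
  ultimately show ?thesis
    using tendsto_unique[of "at (0::'a)"] by simp
qed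

lemma ord_ge_if_bounded_by_factor:
  fixes g :: "'a::real_normed_vector \<Rightarrow> complex"
  assumes "\<And>h. norm (g h) \<le> norm h ^ m * norm (r h)" "isCont r 0"
  shows "ord_ge g m"
proof -
  have "((\<lambda>h. norm (r h)) \<longlongrightarrow> norm (r 0)) (at 0)"
    using assms(2) by (auto intro!: tendsto_intros simp: isCont_def)
  then have ev: "eventually (\<lambda>h. norm (r h) < norm (r 0) + 1) (at 0)"
    by (rule order_tendstoD) simp
  have "eventually (\<lambda>h. norm (g h) \<le> (norm (r 0) + 1) * norm h ^ m) (at 0)"
    using ev
  proof eventually_elim
    case (elim h)
    have "norm h ^ m * norm (r h) \<le> norm h ^ m * (norm (r 0) + 1)"
      using elim by (intro mult_left_mono) auto
    then show ?case using assms(1)[of h] by (simp add: algebra_simps)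
  qed
  then show ?thesis unfolding ord_ge_def by blast
qed

lemma poly_coeff_eq_0_if_ord_ge:
  fixes p :: "complex poly"
  assumes "ord_ge (poly p) m" "k < m"
  shows "coeff p k = 0"
  using assms
proof (induction m arbitrary: p k)
  case 0
  then show ?case by simp
next
  case (Suc m)
  have "poly p 0 = 0"
    using ord_ge_imp_eq_0[OF Suc.prems(1)] by simp
  then obtain q where p: "p = pCons 0 q"
    by (cases p) auto
  obtain C where ev: "eventually (\<lambda>x. norm (poly p x) \<le> C * norm x ^ Suc m) (at 0)"
    using Suc.prems(1) unfolding ord_ge_def by blast
  have "eventually (\<lambda>x. x \<noteq> (0::complex)) (at 0)"
    by (simp add: eventually_at_filter)
  with ev have "eventually (\<lambda>x. norm (poly q x) \<le> C * norm x ^ m) (at 0)"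
    by eventually_elim (simp add: p norm_mult)
  then have "ord_ge (poly q) m"
    unfolding ord_ge_def by blast
  then show ?case
    using Suc.IH Suc.prems(2) by (cases k) (auto simp: p)
qed

lemma coeff_eq_0_if_ord_ge_on_line:
  assumes "ord_ge G m" "\<And>x. norm (\<phi> x) = K * norm x" "K > 0"
    "\<And>x. x \<noteq> 0 \<Longrightarrow> G (\<phi> x) = poly P x" "k < m"
  shows "coeff P k = 0"
proof (rule poly_coeff_eq_0_if_ord_ge[OF _ assms(5)])
  show "ord_ge (poly P) m"
    using ord_ge_compose[OF assms(1-3)]
    by (rule ord_ge_cong) (simp add: eventually_at_filter assms(4))
qed

section \<open>Ternary forms\<close>

lemma hom_eval_3:
  "hom_eval 3 c (x, y, z) =
     c 0 0 * z^3 + c 0 1 * y * z^2 + c 0 2 * y^2 * z + c 0 3 * y^3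
   + c 1 0 * x * z^2 + c 1 1 * x * y * z + c 1 2 * x * y^2
   + c 2 0 * x^2 * z + c 2 1 * x^2 * y + c 3 0 * x^3"
  by (simp add: hom_eval_def numeral_3_eq_3 numeral_2_eq_2 atMost_Suc algebra_simps)

lemma hom_nonzero_3:
  "hom_nonzero 3 c \<longleftrightarrow> (c 0 0 \<noteq> 0 \<or> c 0 1 \<noteq> 0 \<or> c 0 2 \<noteq> 0 \<or> c 0 3 \<noteq> 0 \<or> c 1 0 \<noteq> 0 \<or>
     c 1 1 \<noteq> 0 \<or> c 1 2 \<noteq> 0 \<or> c 2 0 \<noteq> 0 \<or> c 2 1 \<noteq> 0 \<or> c 3 0 \<noteq> 0)"
proof
  assume "hom_nonzero 3 c"
  then obtain i j where ij: "i + j \<le> 3" "c i j \<noteq> 0"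
    unfolding hom_nonzero_def by blast
  then have "i \<in> {0, 1, 2, 3}" "j \<in> {0, 1, 2, 3}" by auto
  with ij show "c 0 0 \<noteq> 0 \<or> c 0 1 \<noteq> 0 \<or> c 0 2 \<noteq> 0 \<or> c 0 3 \<noteq> 0 \<or> c 1 0 \<noteq> 0 \<or>
     c 1 1 \<noteq> 0 \<or> c 1 2 \<noteq> 0 \<or> c 2 0 \<noteq> 0 \<or> c 2 1 \<noteq> 0 \<or> c 3 0 \<noteq> 0"
    by auto
next
  have nz: "c i j \<noteq> 0 \<Longrightarrow> i + j \<le> 3 \<Longrightarrow> hom_nonzero 3 c" for i j
    unfolding hom_nonzero_def by blast
  assume "c 0 0 \<noteq> 0 \<or> c 0 1 \<noteq> 0 \<or> c 0 2 \<noteq> 0 \<or> c 0 3 \<noteq> 0 \<or> c 1 0 \<noteq> 0 \<or>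
     c 1 1 \<noteq> 0 \<or> c 1 2 \<noteq> 0 \<or> c 2 0 \<noteq> 0 \<or> c 2 1 \<noteq> 0 \<or> c 3 0 \<noteq> 0"
  then show "hom_nonzero 3 c"
    by (elim disjE) (erule nz, simp)+
qed

text \<open>Substituting \<open>(1, v, v\<^sup>4)\<close> separates the ten monomials of a cubic by their degree in \<open>v\<close>.\<close>
lemma hom_nonzero_3_imp_ne_0:
  assumes "hom_nonzero 3 c"
  obtains p where "hom_eval 3 c p \<noteq> 0"
proof -
  define P where "P = [:c 3 0, c 2 1, c 1 2, c 0 3, c 2 0, c 1 1, c 0 2, 0, c 1 0, c 0 1, 0, 0, c 0 0:]"
  have "P \<noteq> 0"
    using assms unfolding P_def hom_nonzero_3 by auto
  then obtain v where "poly P v \<noteq> 0"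
    by (metis poly_all_0_iff_0)
  moreover have "poly P v = hom_eval 3 c (1, v, v^4)"
    by (simp add: P_def hom_eval_3 algebra_simps power2_eq_square power3_eq_cube power4_eq_xxxx)
  ultimately show ?thesis using that by simp
qed

lemma isCont_hom_eval: "isCont (\<lambda>h. hom_eval n c (p + h)) h"
  unfolding hom_eval_def case_prod_unfold by (intro continuous_intros)

lemma norm_smul3: "norm (smul3 x e) = norm x * norm e"
proof -
  obtain e1 e2 e3 where e: "e = (e1, e2, e3)" by (cases e) auto
  have "norm (smul3 x e) = sqrt (norm x ^ 2 * (norm e1 ^ 2 + norm e2 ^ 2 + norm e3 ^ 2))"
    by (simp add: e smul3_def norm_Pair norm_mult power_mult_distrib algebra_simps)
  also have "\<dots> = norm x * norm e"
    by (simp add: e real_sqrt_mult norm_Pair add.assoc)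
  finally show ?thesis .
qed

lemma hom_eval_on_line:
  obtains P where "degree P \<le> n" "\<And>x. hom_eval n c (p + smul3 x e) = poly P x"
proof -
  obtain p1 p2 p3 e1 e2 e3 where pe: "p = (p1, p2, p3)" "e = (e1, e2, e3)"
    by (cases p, cases e) auto
  define P where "P = (\<Sum>i\<le>n. \<Sum>j\<le>n - i.
      smult (c i j) ([:p1, e1:] ^ i * [:p2, e2:] ^ j * [:p3, e3:] ^ (n - i - j)))"
  have "degree P \<le> n"
    unfolding P_def
  proof (intro degree_sum_le)
    fix i j assume ij: "i \<in> {..n}" "j \<in> {..n - i}"
    have "degree (smult (c i j) ([:p1, e1:] ^ i * [:p2, e2:] ^ j * [:p3, e3:] ^ (n - i - j)))
        \<le> i + j + (n - i - j)"
      by (intro order.trans[OF degree_smult_le] order.trans[OF degree_mult_le] add_mono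
            order.trans[OF degree_power_le]) auto
    also have "\<dots> = n" using ij by auto
    finally show "degree (smult (c i j) ([:p1, e1:] ^ i * [:p2, e2:] ^ j * [:p3, e3:] ^ (n - i - j))) \<le> n" .
  qed auto
  moreover have "hom_eval n c (p + smul3 x e) = poly P x" for x
    by (simp add: pe P_def hom_eval_def smul3_def poly_sum algebra_simps)
  ultimately show ?thesis using that by blast
qed

lemma hom_eval_eq_0_if_ord_ge:
  assumes "ord_ge (\<lambda>h. hom_eval n c (p + h)) (Suc n)"
  shows "hom_eval n c q = 0"
proof -
  define e where "e = (if q = p then (1, 0, 0) else q - p)"
  have "e \<noteq> 0"
  proof (cases "q = p")
    case True
    then show ?thesis by (simp add: e_def zero_prod_def)
  qed (simp add: e_def)
  obtain P where P: "degree P \<le> n" "\<And>x. hom_eval n c (p + smul3 x e) = poly P x"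
    using hom_eval_on_line[of n c p e] by blast
  have "coeff P k = 0" for k
  proof (cases "k \<le> n")
    case True
    show ?thesis
      by (rule coeff_eq_0_if_ord_ge_on_line[OF assms, of "\<lambda>x. smul3 x e" "norm e"])
        (use True \<open>e \<noteq> 0\<close> P(2) in \<open>auto simp: norm_smul3\<close>)
  qed (use P(1) in \<open>simp add: coeff_eq_0\<close>)
  then have "P = 0" by (simp add: poly_eq_iff)
  moreover obtain x where "q = p + smul3 x e"
  proof (cases "q = p")
    case True
    then show ?thesis using that[of 0] by (simp add: smul3_def zero_prod_def)
  next
    case False
    then have "smul3 1 e = q - p"
      by (cases "q - p") (simp add: e_def smul3_def)
    then show ?thesis using that[of 1] by simp
  qed
  ultimately show ?thesis using P(2)[of x] by simp
qed

section \<open>Sections of \<open>d L\<^sub>2\<close> and the symmetry exchanging \<open>x\<close> and \<open>y\<close>\<close>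

definition swap_xy :: "c3 \<Rightarrow> c3" where
  "swap_xy p = (case p of (x, y, z) \<Rightarrow> (y, x, z))"

definition swap_coeffs :: "(nat \<Rightarrow> nat \<Rightarrow> complex) \<Rightarrow> nat \<Rightarrow> nat \<Rightarrow> complex" where
  "swap_coeffs c i j = c j i"

fun swap_pt :: "s2pt \<Rightarrow> s2pt" where
  "swap_pt (Pt p) = Pt (swap_xy p)"
| "swap_pt (Ex1 w) = Ex2 w"
| "swap_pt (Ex2 w) = Ex1 w"

lemma swap_coeffs_swap_coeffs [simp]: "swap_coeffs (swap_coeffs c) = c"
  by (simp add: swap_coeffs_def fun_eq_iff)

lemma sum_triangle_swap:
  fixes n :: nat
  shows "(\<Sum>i\<le>n. \<Sum>j\<le>n - i. f i j) = (\<Sum>j\<le>n. \<Sum>i\<le>n - j. f i j)"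
proof -
  have "(\<Sum>i\<le>n. \<Sum>j\<le>n - i. f i j) = (\<Sum>i\<le>n. \<Sum>j | j \<in> {..n} \<and> i + j \<le> n. f i j)"
    by (intro sum.cong) auto
  also have "\<dots> = (\<Sum>j\<le>n. \<Sum>i | i \<in> {..n} \<and> i + j \<le> n. f i j)"
    using sum.swap_restrict[of "{..n}" "{..n}" f "\<lambda>i j. i + j \<le> n"] by simp
  also have "\<dots> = (\<Sum>j\<le>n. \<Sum>i\<le>n - j. f i j)"
    by (intro sum.cong) auto
  finally show ?thesis .
qed

lemma hom_eval_swap_coeffs: "hom_eval n (swap_coeffs c) p = hom_eval n c (swap_xy p)"
proof -
  obtain x y z where p: "p = (x, y, z)" by (cases p) auto
  have "hom_eval n (swap_coeffs c) p = (\<Sum>i\<le>n. \<Sum>j\<le>n - i. c j i * x ^ i * y ^ j * z ^ (n - i - j))"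
    by (simp add: p hom_eval_def swap_coeffs_def)
  also have "\<dots> = (\<Sum>j\<le>n. \<Sum>i\<le>n - j. c j i * x ^ i * y ^ j * z ^ (n - i - j))"
    by (rule sum_triangle_swap)
  also have "\<dots> = hom_eval n c (swap_xy p)"
    by (simp add: p hom_eval_def swap_xy_def) (intro sum.cong refl, simp add: ac_simps)
  finally show ?thesis .
qed

lemma norm_swap_xy: "norm (swap_xy h) = norm h"
  by (cases h) (simp add: swap_xy_def norm_Pair algebra_simps)

lemma ord_ge_swap_xy_iff: "ord_ge (\<lambda>h. g (swap_xy h)) m \<longleftrightarrow> ord_ge g m"
proof
  have swap_swap: "swap_xy (swap_xy h) = h" for h
    by (cases h) (simp add: swap_xy_def)
  assume "ord_ge (\<lambda>h. g (swap_xy h)) m"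
  from ord_ge_compose[OF this, of swap_xy 1] show "ord_ge g m"
    by (simp add: norm_swap_xy swap_swap)
qed (rule ord_ge_compose[of _ _ swap_xy 1], simp_all add: norm_swap_xy)

lemma section_dL_swap_coeffs:
  assumes "section_dL d c"
  shows "section_dL d (swap_coeffs c)"
proof -
  have "hom_nonzero (3 * d) (swap_coeffs c)"
    using assms unfolding section_dL_def hom_nonzero_def swap_coeffs_def by (metis add.commute)
  moreover have "swap_xy (P1 + h) = P2 + swap_xy h" "swap_xy (P2 + h) = P1 + swap_xy h" for h
    by (cases h, simp add: P1_def P2_def swap_xy_def)+
  ultimately show ?thesis
    using assms ord_ge_swap_xy_iff[of "\<lambda>h. hom_eval (3 * d) c (P1 + h)"]
      ord_ge_swap_xy_iff[of "\<lambda>h. hom_eval (3 * d) c (P2 + h)"]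
    by (simp add: section_dL_def hom_eval_swap_coeffs)
qed

lemma mult_ge_swap: "mult_ge d (swap_coeffs c) (swap_pt Q) m \<longleftrightarrow> mult_ge d c Q m"
proof (cases Q)
  case (Pt p)
  have "swap_xy (swap_xy p + h) = p + swap_xy h" for h
    by (cases p, cases h) (simp add: swap_xy_def)
  then show ?thesis
    using ord_ge_swap_xy_iff[of "\<lambda>h. hom_eval (3 * d) c (p + h)"]
    by (simp add: Pt hom_eval_swap_coeffs)
next
  case (Ex1 w)
  have "swap_xy (P2 + smul3 s (dir2 w) + smul3 (s * t) (cmp2 w))
      = P1 + smul3 s (dir1 w) + smul3 (s * t) (cmp1 w)" for s t
    by (cases w) (simp add: P1_def P2_def swap_xy_def smul3_def dir1_def dir2_def cmp1_def cmp2_def)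
  then show ?thesis
    by (simp add: Ex1 hom_eval_swap_coeffs)
next
  case (Ex2 w)
  have "swap_xy (P1 + smul3 s (dir1 w) + smul3 (s * t) (cmp1 w))
      = P2 + smul3 s (dir2 w) + smul3 (s * t) (cmp2 w)" for s t
    by (cases w) (simp add: P1_def P2_def swap_xy_def smul3_def dir1_def dir2_def cmp1_def cmp2_def)
  then show ?thesis
    by (simp add: Ex2 hom_eval_swap_coeffs)
qed

lemma mult_ge_mono:
  assumes "mult_ge d c Q m" "m' \<le> m"
  shows "mult_ge d c Q m'"
  using assms by (cases Q) (auto intro: ord_ge_mono)

lemma section_dL_vanishes_at_P1_P2:
  assumes "section_dL d c" "d \<ge> 1"
  shows "hom_eval (3 * d) c P1 = 0" "hom_eval (3 * d) c P2 = 0"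
  using ord_ge_imp_eq_0[OF _ assms(2) isCont_hom_eval] assms(1)
  by (simp_all add: section_dL_def)

lemma no_section_of_degree_0:
  assumes "section_dL 0 c" "m \<ge> 1"
  shows "\<not> mult_ge 0 c Q m"
proof
  have const: "hom_eval 0 c p = c 0 0" for p
    by (simp add: hom_eval_def split: prod.split)
  assume "mult_ge 0 c Q m"
  then have "ord_ge (\<lambda>_::c3. c 0 0) m \<or> ord_ge (\<lambda>_::complex \<times> complex. c 0 0) m"
    by (cases Q) (simp_all add: const case_prod_unfold)
  then have "c 0 0 = 0"
    by (elim disjE) (drule ord_ge_imp_eq_0[OF _ assms(2) continuous_const], simp)+
  then show False
    using assms(1) by (simp add: section_dL_def hom_nonzero_def)
qed

lemma section_dL_1_through_P1_P2:
  assumes "section_dL 1 c"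
  shows "hom_eval 3 c P1 = 0" "hom_eval 3 c P2 = 0"
  using section_dL_vanishes_at_P1_P2[OF assms] by simp_all

lemma section_dL_1_not_identically_0:
  assumes "section_dL 1 c"
  obtains p where "hom_eval 3 c p \<noteq> 0"
proof -
  have "hom_nonzero 3 c"
    using assms by (simp add: section_dL_def)
  then show ?thesis
    using hom_nonzero_3_imp_ne_0 that by blast
qed

lemma no_cubic_mult_4_at_Pt:
  assumes "section_dL 1 c"
  shows "\<not> mult_ge 1 c (Pt p) 4"
proof
  assume "mult_ge 1 c (Pt p) 4"
  then have "hom_eval 3 c q = 0" for q
    using hom_eval_eq_0_if_ord_ge[of 3 c p q] by (simp add: numeral_eq_Suc)
  then show False
    using section_dL_1_not_identically_0[OF assms] by blast
qed

section \<open>Cones over \<open>P1\<close>\<close>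

lemma normP1_cases:
  assumes "normP1 w"
  obtains a where "w = (1, a)" | "w = (0, 1)"
  using assms by (cases w) (auto simp: normP1_def)

lemma normP1_snd_ne_0: "normP1 w \<Longrightarrow> w \<noteq> (1, 0) \<Longrightarrow> snd w \<noteq> 0"
  by (cases w) (auto simp: normP1_def)

lemma normP1_det_ne_0:
  "normP1 w \<Longrightarrow> normP1 w' \<Longrightarrow> w \<noteq> w' \<Longrightarrow> snd w * fst w' - fst w * snd w' \<noteq> 0"
  by (cases w, cases w') (auto simp: normP1_def)

lemma ord_ge_if_z_power_factor:
  fixes g :: "c3 \<Rightarrow> complex"
  assumes "\<And>h. g h = snd (snd h) ^ m * r h" "isCont r 0"
  shows "ord_ge g m"
proof (rule ord_ge_if_bounded_by_factor[OF _ assms(2)])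
  fix h :: c3
  have "norm (snd (snd h)) \<le> norm h"
    using order_trans[OF norm_snd_le norm_snd_le] by (metis prod.collapse)
  then have "norm (snd (snd h)) ^ m \<le> norm h ^ m"
    by (simp add: power_mono)
  then show "norm (g h) \<le> norm h ^ m * norm (r h)"
    by (simp add: assms(1) norm_mult norm_power mult_right_mono)
qed

lemma ord_ge_if_monomial_factor:
  fixes g :: "complex \<times> complex \<Rightarrow> complex"
  assumes "\<And>s t. s \<noteq> 0 \<Longrightarrow> g (s, t) = s ^ p * t ^ q * r (s, t)" "\<And>t. g (0, t) = 0" "isCont r 0"
  shows "ord_ge g (p + q)"
proof (rule ord_ge_if_bounded_by_factor[OF _ assms(3)])
  fix h :: "complex \<times> complex"
  obtain s t where h: "h = (s, t)" by (cases h) auto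
  show "norm (g h) \<le> norm h ^ (p + q) * norm (r h)"
  proof (cases "s = 0")
    case False
    have "norm s \<le> norm h" "norm t \<le> norm h"
      unfolding h by (rule norm_fst_le, rule norm_snd_le)
    then have "norm s ^ p * norm t ^ q \<le> norm h ^ p * norm h ^ q"
      by (intro mult_mono power_mono) auto
    then have "norm s ^ p * norm t ^ q * norm (r h) \<le> norm h ^ (p + q) * norm (r h)"
      by (simp add: power_add mult_right_mono)
    then show ?thesis
      using False by (simp add: h assms(1) norm_mult norm_power)
  qed (simp add: h assms(2))
qed

text \<open>The coefficients of \<open>z\<^sup>d (e y - b z)\<^sup>2\<^sup>d\<close> for \<open>w = (b, e)\<close>: the line \<open>L12\<close> counted \<open>d\<close> times
  and the line through \<open>P1\<close> in direction \<open>w\<close> counted \<open>2d\<close> times.\<close>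
definition cone_form :: "nat \<Rightarrow> complex \<times> complex \<Rightarrow> nat \<Rightarrow> nat \<Rightarrow> complex" where
  "cone_form d w i j =
     (if i = 0 \<and> j \<le> 2 * d then of_nat (2 * d choose j) * snd w ^ j * (- fst w) ^ (2 * d - j) else 0)"

lemma hom_eval_cone_form:
  "hom_eval (3 * d) (cone_form d w) (x, y, z) = z ^ d * (snd w * y - fst w * z) ^ (2 * d)"
proof -
  let ?term = "\<lambda>j. of_nat (2 * d choose j) * (snd w * y) ^ j * (- fst w * z) ^ (2 * d - j)"
  have "hom_eval (3 * d) (cone_form d w) (x, y, z) =
      (\<Sum>i\<le>3 * d. if i = 0 then \<Sum>j\<le>3 * d. cone_form d w 0 j * y ^ j * z ^ (3 * d - j) else 0)"
    unfolding hom_eval_def prod.case by (intro sum.cong) (auto simp: cone_form_def)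
  also have "\<dots> = (\<Sum>j\<le>3 * d. cone_form d w 0 j * y ^ j * z ^ (3 * d - j))"
    by simp
  also have "\<dots> = (\<Sum>j\<le>2 * d. cone_form d w 0 j * y ^ j * z ^ (3 * d - j))"
    by (rule sum.mono_neutral_right) (auto simp: cone_form_def)
  also have "\<dots> = (\<Sum>j\<le>2 * d. z ^ d * ?term j)"
  proof (intro sum.cong refl)
    fix j
    assume "j \<in> {..2 * d}"
    then have "z ^ (3 * d - j) = z ^ d * z ^ (2 * d - j)"
      by (simp flip: power_add)
    with \<open>j \<in> {..2 * d}\<close> show "cone_form d w 0 j * y ^ j * z ^ (3 * d - j) = z ^ d * ?term j"
      unfolding cone_form_def power_mult_distrib by (simp add: mult_ac)
  qed
  also have "\<dots> = z ^ d * (snd w * y - fst w * z) ^ (2 * d)"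
    using binomial_ring[of "snd w * y" "- fst w * z" "2 * d"] by (simp add: sum_distrib_left)
  finally show ?thesis .
qed

lemma section_dL_cone_form:
  assumes "w \<noteq> (0, 0)"
  shows "section_dL d (cone_form d w)"
proof -
  have "hom_nonzero (3 * d) (cone_form d w)"
  proof (cases "fst w = 0")
    case True
    then have "cone_form d w 0 (2 * d) \<noteq> 0"
      using assms by (cases w) (simp add: cone_form_def)
    then show ?thesis
      unfolding hom_nonzero_def by (intro exI[of _ 0] exI[of _ "2 * d"]) simp
  next
    case False
    then have "cone_form d w 0 0 \<noteq> 0"
      by (simp add: cone_form_def)
    then show ?thesis
      unfolding hom_nonzero_def by (intro exI[of _ 0] exI[of _ 0]) simp
  qed
  moreover have "ord_ge (\<lambda>h. hom_eval (3 * d) (cone_form d w) ((p1, p2, 0) + h)) d" for p1 p2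
  proof (rule ord_ge_if_z_power_factor)
    show "hom_eval (3 * d) (cone_form d w) ((p1, p2, 0) + h) =
        snd (snd h) ^ d * (snd w * (p2 + fst (snd h)) - fst w * snd (snd h)) ^ (2 * d)" for h
      by (cases h) (simp add: hom_eval_cone_form)
  qed (intro continuous_intros)
  ultimately show ?thesis
    by (simp add: section_dL_def P1_def P2_def)
qed

lemma mult_ge_cone_form:
  assumes "normP1 w" "d \<ge> 1"
  shows "mult_ge d (cone_form d w) (Ex1 w) (4 * d)"
proof -
  let ?G = "\<lambda>(s, t). hom_eval (3 * d) (cone_form d w) (P1 + smul3 s (dir1 w) + smul3 (s * t) (cmp1 w)) / s ^ d"
  from assms(1) have "ord_ge ?G (2 * d + 2 * d)"
  proof (cases rule: normP1_cases)
    case (1 e)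
    have "?G (s, t) = s ^ (2 * d) * t ^ (2 * d) * (e + t) ^ d" if "s \<noteq> 0" for s t
    proof -
      have "P1 + smul3 s (dir1 w) + smul3 (s * t) (cmp1 w) = (1, s, s * (e + t))"
        by (simp add: 1 P1_def smul3_def dir1_def cmp1_def algebra_simps)
      then have "?G (s, t) = (s * (e + t)) ^ d * (e * s - s * (e + t)) ^ (2 * d) / s ^ d"
        by (simp add: 1 hom_eval_cone_form)
      also have "e * s - s * (e + t) = - (s * t)"
        by algebra
      finally show ?thesis
        using that by (simp add: power_mult_distrib mult_ac)
    qed
    then show ?thesis
      by (intro ord_ge_if_monomial_factor[where r = "\<lambda>h. (e + snd h) ^ d"])
        (use assms(2) in \<open>auto intro!: continuous_intros\<close>)
  next
    case 2
    have "?G (s, t) = s ^ (2 * d) * t ^ (2 * d) * 1" if "s \<noteq> 0" for s t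
    proof -
      have "P1 + smul3 s (dir1 w) + smul3 (s * t) (cmp1 w) = (1, s * t, s)"
        by (simp add: 2 P1_def smul3_def dir1_def cmp1_def)
      then have "?G (s, t) = s ^ d * (s * t) ^ (2 * d) / s ^ d"
        by (simp add: 2 hom_eval_cone_form)
      then show ?thesis
        using that by (simp add: power_mult_distrib)
    qed
    then show ?thesis
      by (intro ord_ge_if_monomial_factor[where r = "\<lambda>_. 1"]) (use assms(2) in auto)
  qed
  moreover have "4 * d = 2 * d + 2 * d" by simp
  ultimately show ?thesis by (simp only: mult_ge.simps)
qed

lemma mult_ge_cone_form_L12:
  assumes "d \<ge> 1"
  shows "mult_ge d (cone_form d (1, 0)) (Ex1 (1, 0)) (5 * d)"
proof -
  let ?G = "\<lambda>(s, t). hom_eval (3 * d) (cone_form d (1, 0))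
      (P1 + smul3 s (dir1 (1, 0)) + smul3 (s * t) (cmp1 (1, 0))) / s ^ d"
  have "?G (s, t) = s ^ (2 * d) * t ^ (3 * d) * 1" if "s \<noteq> 0" for s t
  proof -
    have "?G (s, t) = (s * t) ^ d * (- (s * t)) ^ (2 * d) / s ^ d"
      by (simp add: P1_def smul3_def dir1_def cmp1_def hom_eval_cone_form)
    also have "t ^ (3 * d) = t ^ d * t ^ (2 * d)"
      by (simp flip: power_add)
    ultimately show ?thesis
      using that by (simp add: power_mult_distrib)
  qed
  then have "ord_ge ?G (2 * d + 3 * d)"
    by (intro ord_ge_if_monomial_factor[where r = "\<lambda>_. 1"]) (use assms in auto)
  then show ?thesis by simp
qed

lemma swap_coeffs_cone_form_L12: "swap_coeffs (cone_form d (1, 0)) = cone_form d (1, 0)"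
  by (auto simp: fun_eq_iff swap_coeffs_def cone_form_def)

section \<open>Cubics of high multiplicity at a point of \<open>E1\<close>\<close>

lemma coeff_eq_0_if_ord_ge_on_slope:
  fixes G :: "complex \<times> complex \<Rightarrow> complex"
  assumes "ord_ge G m" "\<And>x. x \<noteq> 0 \<Longrightarrow> G (x, x * u) = poly P x" "k < m"
  shows "coeff P k = 0"
proof (rule coeff_eq_0_if_ord_ge_on_line[OF assms(1) _ _ assms(2) assms(3)])
  fix x
  have "norm (x, x * u) = sqrt ((1 + (norm u)\<^sup>2) * (norm x)\<^sup>2)"
    by (simp add: norm_Pair norm_mult power_mult_distrib algebra_simps)
  then show "norm (x, x * u) = sqrt (1 + (norm u)\<^sup>2) * norm x"
    by (simp add: real_sqrt_mult)
qed (simp add: add_pos_nonneg)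

text \<open>Restricting the chart of \<open>E1\<close> at \<open>(1, a)\<close> to the line \<open>t = u s\<close>; the coefficients
  below are those of \<open>F(1, s, s (a + u s)) / s\<close>.\<close>
lemma cubic_Ex1_affine_line_coeff:
  assumes "mult_ge 1 c (Ex1 (1, a)) m" "c 3 0 = 0" "k < m"
  shows "coeff [:c 2 0 * a + c 2 1,
      c 1 0 * a^2 + c 1 1 * a + c 1 2 + c 2 0 * u,
      c 0 0 * a^3 + c 0 1 * a^2 + c 0 2 * a + c 0 3 + 2 * c 1 0 * a * u + c 1 1 * u,
      3 * c 0 0 * a^2 * u + 2 * c 0 1 * a * u + c 0 2 * u + c 1 0 * u^2,
      3 * c 0 0 * a * u^2 + c 0 1 * u^2,
      c 0 0 * u^3:] k = 0"
proof (rule coeff_eq_0_if_ord_ge_on_slope[OF _ _ assms(3)])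
  show "ord_ge (\<lambda>(s, t). hom_eval 3 c (P1 + smul3 s (dir1 (1, a)) + smul3 (s * t) (cmp1 (1, a))) / s) m"
    using assms(1) by simp
  fix x :: complex
  assume "x \<noteq> 0"
  then show "(\<lambda>(s, t). hom_eval 3 c (P1 + smul3 s (dir1 (1, a)) + smul3 (s * t) (cmp1 (1, a))) / s) (x, x * u) =
      poly [:c 2 0 * a + c 2 1,
      c 1 0 * a^2 + c 1 1 * a + c 1 2 + c 2 0 * u,
      c 0 0 * a^3 + c 0 1 * a^2 + c 0 2 * a + c 0 3 + 2 * c 1 0 * a * u + c 1 1 * u,
      3 * c 0 0 * a^2 * u + 2 * c 0 1 * a * u + c 0 2 * u + c 1 0 * u^2,
      3 * c 0 0 * a * u^2 + c 0 1 * u^2,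
      c 0 0 * u^3:] x"
    using assms(2)
    by (simp add: hom_eval_3 P1_def smul3_def dir1_def cmp1_def divide_eq_eq)
      (simp add: algebra_simps power2_eq_square power3_eq_cube power4_eq_xxxx)
qed

lemma cubic_Ex1_infinite_line_coeff:
  assumes "mult_ge 1 c (Ex1 (0, 1)) m" "c 3 0 = 0" "k < m"
  shows "coeff [:c 2 0, c 1 0 + c 2 1 * u, c 0 0 + c 1 1 * u, c 0 1 * u + c 1 2 * u^2,
      c 0 2 * u^2, c 0 3 * u^3:] k = 0"
proof (rule coeff_eq_0_if_ord_ge_on_slope[OF _ _ assms(3)])
  show "ord_ge (\<lambda>(s, t). hom_eval 3 c (P1 + smul3 s (dir1 (0, 1)) + smul3 (s * t) (cmp1 (0, 1))) / s) m"
    using assms(1) by simp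
  fix x :: complex
  assume "x \<noteq> 0"
  then show "(\<lambda>(s, t). hom_eval 3 c (P1 + smul3 s (dir1 (0, 1)) + smul3 (s * t) (cmp1 (0, 1))) / s) (x, x * u) =
      poly [:c 2 0, c 1 0 + c 2 1 * u, c 0 0 + c 1 1 * u, c 0 1 * u + c 1 2 * u^2,
      c 0 2 * u^2, c 0 3 * u^3:] x"
    using assms(2)
    by (simp add: hom_eval_3 P1_def smul3_def dir1_def cmp1_def divide_eq_eq)
      (simp add: algebra_simps power2_eq_square power3_eq_cube power4_eq_xxxx)
qed

lemma cubic_mult_4_Ex1_affine:
  assumes "mult_ge 1 c (Ex1 (1, a)) 4" "c 3 0 = 0"
  shows "c 1 0 = 0" "c 1 1 = 0" "c 1 2 = 0" "c 2 0 = 0" "c 2 1 = 0"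
    "c 0 3 + c 0 2 * a + c 0 1 * a^2 + c 0 0 * a^3 = 0" "c 0 2 + 2 * c 0 1 * a + 3 * c 0 0 * a^2 = 0"
proof -
  note coeff = cubic_Ex1_affine_line_coeff[OF assms]
  have "c 2 0 * a + c 2 1 = 0"
    using coeff[where k = 0 and u = 0] by simp
  moreover have "c 1 0 * a^2 + c 1 1 * a + c 1 2 = 0" "c 1 0 * a^2 + c 1 1 * a + c 1 2 + c 2 0 = 0"
    using coeff[where k = 1 and u = 0] coeff[where k = 1 and u = 1] by simp_all
  moreover have "c 0 0 * a^3 + c 0 1 * a^2 + c 0 2 * a + c 0 3 = 0"
      "c 0 0 * a^3 + c 0 1 * a^2 + c 0 2 * a + c 0 3 + 2 * c 1 0 * a + c 1 1 = 0"
    using coeff[where k = 2 and u = 0] coeff[where k = 2 and u = 1] by (simp_all add: numeral_2_eq_2)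
  moreover have "3 * c 0 0 * a^2 + 2 * c 0 1 * a + c 0 2 + c 1 0 = 0"
      "- (3 * c 0 0 * a^2) - 2 * c 0 1 * a - c 0 2 + c 1 0 = 0"
    using coeff[where k = 3 and u = 1] coeff[where k = 3 and u = "-1"] by (simp_all add: numeral_3_eq_3)
  ultimately show "c 1 0 = 0" "c 1 1 = 0" "c 1 2 = 0" "c 2 0 = 0" "c 2 1 = 0"
    "c 0 3 + c 0 2 * a + c 0 1 * a^2 + c 0 0 * a^3 = 0" "c 0 2 + 2 * c 0 1 * a + 3 * c 0 0 * a^2 = 0"
    by algebra+
qed

lemma cubic_mult_4_Ex1_infinite:
  assumes "mult_ge 1 c (Ex1 (0, 1)) 4" "c 3 0 = 0"
  shows "c 1 0 = 0" "c 1 1 = 0" "c 1 2 = 0" "c 2 0 = 0" "c 2 1 = 0" "c 0 0 = 0" "c 0 1 = 0"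
proof -
  note coeff = cubic_Ex1_infinite_line_coeff[OF assms]
  have "c 2 0 = 0" "c 1 0 = 0" "c 1 0 + c 2 1 = 0"
    using coeff[where k = 0 and u = 0] coeff[where k = 1 and u = 0] coeff[where k = 1 and u = 1]
    by simp_all
  moreover have "c 0 0 = 0" "c 0 0 + c 1 1 = 0"
    using coeff[where k = 2 and u = 0] coeff[where k = 2 and u = 1] by (simp_all add: numeral_2_eq_2)
  moreover have "c 0 1 + c 1 2 = 0" "- c 0 1 + c 1 2 = 0"
    using coeff[where k = 3 and u = 1] coeff[where k = 3 and u = "-1"] by (simp_all add: numeral_3_eq_3)
  ultimately show "c 1 0 = 0" "c 1 1 = 0" "c 1 2 = 0" "c 2 0 = 0" "c 2 1 = 0" "c 0 0 = 0" "c 0 1 = 0"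
    by algebra+
qed

lemma cubic_mult_5_Ex1_affine:
  assumes "mult_ge 1 c (Ex1 (1, a)) 5" "c 3 0 = 0"
  shows "3 * c 0 0 * a + c 0 1 = 0"
  using cubic_Ex1_affine_line_coeff[OF assms, where k = 4 and u = 1] by (simp add: numeral_eq_Suc)

lemma cubic_mult_5_Ex1_infinite:
  assumes "mult_ge 1 c (Ex1 (0, 1)) 5" "c 3 0 = 0"
  shows "c 0 2 = 0"
  using cubic_Ex1_infinite_line_coeff[OF assms, where k = 4 and u = 1] by (simp add: numeral_eq_Suc)

lemma cubic_mult_4_Ex1_factor:
  assumes "mult_ge 1 c (Ex1 w) 4" "normP1 w" "hom_eval 3 c P1 = 0"
  obtains \<alpha> \<beta> where "\<And>x y z. hom_eval 3 c (x, y, z) = (snd w * y - fst w * z)^2 * (\<alpha> * y + \<beta> * z)"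
proof -
  have c30: "c 3 0 = 0"
    using assms(3) by (simp add: P1_def hom_eval_3)
  from assms(2) show ?thesis
  proof (cases rule: normP1_cases)
    case (1 a)
    note eqs = cubic_mult_4_Ex1_affine[OF assms(1)[unfolded 1] c30]
    have "hom_eval 3 c (x, y, z) = (a * y - z)^2 * ((c 0 1 + 2 * a * c 0 0) * y + c 0 0 * z)" for x y z
    proof -
      have "hom_eval 3 c (x, y, z) = c 0 0 * z^3 + c 0 1 * y * z^2 + c 0 2 * y^2 * z + c 0 3 * y^3"
        unfolding hom_eval_3 eqs(1-5) c30 by simp
      with eqs(6,7) show ?thesis by algebra
    qed
    then show ?thesis
      using that[of "c 0 1 + 2 * a * c 0 0" "c 0 0"] by (simp add: 1)
  next
    case 2
    note eqs = cubic_mult_4_Ex1_infinite[OF assms(1)[unfolded 2] c30]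
    show ?thesis
      by (rule that[of "c 0 3" "c 0 2"]) (unfold 2 hom_eval_3 eqs c30, simp add: power2_eq_square power3_eq_cube algebra_simps)
  qed
qed

lemma cubic_mult_5_Ex1_cube:
  assumes "mult_ge 1 c (Ex1 w) 5" "normP1 w" "hom_eval 3 c P1 = 0"
  obtains \<kappa> where "\<And>x y z. hom_eval 3 c (x, y, z) = \<kappa> * (snd w * y - fst w * z)^3"
proof -
  have c30: "c 3 0 = 0"
    using assms(3) by (simp add: P1_def hom_eval_3)
  have mult4: "mult_ge 1 c (Ex1 w) 4"
    using mult_ge_mono[OF assms(1)] by simp
  from assms(2) show ?thesis
  proof (cases rule: normP1_cases)
    case (1 a)
    note eqs = cubic_mult_4_Ex1_affine[OF mult4[unfolded 1] c30]
      cubic_mult_5_Ex1_affine[OF assms(1)[unfolded 1] c30]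
    have "hom_eval 3 c (x, y, z) = - c 0 0 * (a * y - z)^3" for x y z
    proof -
      have "hom_eval 3 c (x, y, z) = c 0 0 * z^3 + c 0 1 * y * z^2 + c 0 2 * y^2 * z + c 0 3 * y^3"
        unfolding hom_eval_3 eqs(1-5) c30 by simp
      with eqs(6-8) show ?thesis by algebra
    qed
    then show ?thesis
      using that[of "- c 0 0"] by (simp add: 1)
  next
    case 2
    note eqs = cubic_mult_4_Ex1_infinite[OF mult4[unfolded 2] c30]
      cubic_mult_5_Ex1_infinite[OF assms(1)[unfolded 2] c30]
    show ?thesis
      by (rule that[of "c 0 3"]) (unfold 2 hom_eval_3 eqs c30, simp add: power3_eq_cube)
  qed
qed

lemma no_cubic_mult_5_Ex1_off_L12:
  assumes "section_dL 1 c" "normP1 w" "w \<noteq> (1, 0)"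
  shows "\<not> mult_ge 1 c (Ex1 w) 5"
proof
  assume "mult_ge 1 c (Ex1 w) 5"
  then obtain \<kappa> where F: "\<And>x y z. hom_eval 3 c (x, y, z) = \<kappa> * (snd w * y - fst w * z)^3"
    using cubic_mult_5_Ex1_cube assms(2) section_dL_1_through_P1_P2(1)[OF assms(1)] by blast
  have "\<kappa> * snd w ^ 3 = 0"
    using F[of 0 1 0] section_dL_1_through_P1_P2(2)[OF assms(1)] by (simp add: P2_def)
  then have "\<kappa> = 0"
    using normP1_snd_ne_0[OF assms(2,3)] by simp
  then have "hom_eval 3 c p = 0" for p
    using F by (cases p) simp
  then show False
    using section_dL_1_not_identically_0[OF assms(1)] by blast
qed

lemma double_line_factors_eq_imp_zero:
  fixes b e b' e' \<alpha> \<beta> \<alpha>' \<beta>' :: "'a::field_char_0"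
  assumes ev: "\<And>y z. (e * y - b * z)^2 * (\<alpha> * y + \<beta> * z) = (e' * y - b' * z)^2 * (\<alpha>' * y + \<beta>' * z)"
    and "e * b' - b * e' \<noteq> 0"
  shows "\<alpha> = 0" "\<beta> = 0"
proof -
  define \<delta> where "\<delta> = e * b' - b * e'"
  have "\<delta> \<noteq> 0"
    using assms(2) by (simp add: \<delta>_def)
  have "\<delta>^2 * (\<alpha> * b' + \<beta> * e') = 0"
    using ev[of b' e'] by (simp add: \<delta>_def mult.commute)
  moreover have "\<delta>^2 * (\<alpha>' * b + \<beta>' * e) = 0"
  proof -
    have "(e' * b - b' * e)^2 = \<delta>^2"
      unfolding \<delta>_def by algebra
    then show ?thesis
      using ev[of b e] by (simp add: mult.commute)
  qed
  moreover have "\<delta>^2 * (\<alpha> * (b + b') + \<beta> * (e + e')) = \<delta>^2 * (\<alpha>' * (b + b') + \<beta>' * (e + e'))"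
  proof -
    have "e * (b + b') - b * (e + e') = \<delta>" "(e' * (b + b') - b' * (e + e'))^2 = \<delta>^2"
      unfolding \<delta>_def by algebra+
    then show ?thesis
      using ev[of "b + b'" "e + e'"] by simp
  qed
  moreover have "\<delta>^2 * (\<alpha> * (b - b') + \<beta> * (e - e')) = \<delta>^2 * (\<alpha>' * (b - b') + \<beta>' * (e - e'))"
  proof -
    have "(e * (b - b') - b * (e - e'))^2 = \<delta>^2" "(e' * (b - b') - b' * (e - e'))^2 = \<delta>^2"
      unfolding \<delta>_def by algebra+
    then show ?thesis
      using ev[of "b - b'" "e - e'"] by simp
  qed
  ultimately have "\<alpha> * b' + \<beta> * e' = 0" "\<alpha> * b + \<beta> * e = 0"
    using \<open>\<delta> \<noteq> 0\<close> by (simp_all, algebra)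
  then have "\<delta> * \<alpha> = 0" "\<delta> * \<beta> = 0"
    unfolding \<delta>_def by algebra+
  then show "\<alpha> = 0" "\<beta> = 0"
    using \<open>\<delta> \<noteq> 0\<close> by simp_all
qed

lemma no_cubic_mult_4_two_Ex1:
  assumes "section_dL 1 c" "normP1 w" "normP1 w'" "w \<noteq> w'"
  shows "\<not> (mult_ge 1 c (Ex1 w) 4 \<and> mult_ge 1 c (Ex1 w') 4)"
proof
  assume "mult_ge 1 c (Ex1 w) 4 \<and> mult_ge 1 c (Ex1 w') 4"
  then obtain \<alpha> \<beta> \<alpha>' \<beta>' where
      F: "\<And>x y z. hom_eval 3 c (x, y, z) = (snd w * y - fst w * z)^2 * (\<alpha> * y + \<beta> * z)" and
      F': "\<And>x y z. hom_eval 3 c (x, y, z) = (snd w' * y - fst w' * z)^2 * (\<alpha>' * y + \<beta>' * z)"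
    using cubic_mult_4_Ex1_factor assms(2,3) section_dL_1_through_P1_P2(1)[OF assms(1)] by metis
  have "(snd w * y - fst w * z)^2 * (\<alpha> * y + \<beta> * z) = (snd w' * y - fst w' * z)^2 * (\<alpha>' * y + \<beta>' * z)"
    for y z
    using F[of 0 y z] F'[of 0 y z] by simp
  from double_line_factors_eq_imp_zero[OF this normP1_det_ne_0[OF assms(2-4)]]
  have "\<alpha> = 0" "\<beta> = 0" .
  then have "hom_eval 3 c p = 0" for p
    using F by (cases p) simp
  then show False
    using section_dL_1_not_identically_0[OF assms(1)] by blast
qed

text \<open>By the symmetry exchanging \<open>x\<close> and \<open>y\<close>, the cubic is a cone with vertex \<open>P1\<close> and also one
  with vertex \<open>P2\<close>, hence a multiple of \<open>z\<^sup>3\<close>, which cannot vanish at the direction \<open>w \<noteq> (1, 0)\<close>.\<close>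
lemma no_cubic_mult_4_Ex1_Ex2:
  assumes "section_dL 1 c" "normP1 w" "normP1 w'" "w \<noteq> (1, 0)"
  shows "\<not> (mult_ge 1 c (Ex1 w) 4 \<and> mult_ge 1 c (Ex2 w') 4)"
proof
  assume mult4: "mult_ge 1 c (Ex1 w) 4 \<and> mult_ge 1 c (Ex2 w') 4"
  obtain \<alpha> \<beta> where
      F: "\<And>x y z. hom_eval 3 c (x, y, z) = (snd w * y - fst w * z)^2 * (\<alpha> * y + \<beta> * z)"
    using cubic_mult_4_Ex1_factor mult4 assms(2) section_dL_1_through_P1_P2(1)[OF assms(1)] by metis
  have "mult_ge 1 (swap_coeffs c) (Ex1 w') 4"
    using mult4 mult_ge_swap[of 1 c "Ex2 w'" 4] by simp
  moreover have "hom_eval 3 (swap_coeffs c) P1 = 0"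
    using section_dL_1_through_P1_P2(2)[OF assms(1)]
    by (simp add: hom_eval_swap_coeffs swap_xy_def P1_def P2_def)
  ultimately obtain \<alpha>' \<beta>' where
      "\<And>x y z. hom_eval 3 (swap_coeffs c) (x, y, z) = (snd w' * y - fst w' * z)^2 * (\<alpha>' * y + \<beta>' * z)"
    using cubic_mult_4_Ex1_factor assms(3) by metis
  then have F': "\<And>x y z. hom_eval 3 c (x, y, z) = (snd w' * x - fst w' * z)^2 * (\<alpha>' * x + \<beta>' * z)"
    by (simp add: hom_eval_swap_coeffs swap_xy_def)
  have "hom_eval 3 c (0, fst w, snd w) = 0"
    using F[of 0 "fst w" "snd w"] by (simp only: mult.commute diff_self) simp
  moreover have "hom_eval 3 c (0, fst w, snd w) = fst w' ^ 2 * \<beta>' * snd w ^ 3"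
    unfolding F' by algebra
  ultimately have "fst w' ^ 2 * \<beta>' * snd w ^ 3 = 0"
    by simp
  then have "fst w' ^ 2 * \<beta>' = 0"
    using normP1_snd_ne_0[OF assms(2,4)] by simp
  have "hom_eval 3 c (x, y, z) = 0" for x y z
  proof -
    have "hom_eval 3 c (x, y, z) = hom_eval 3 c (0, y, z)"
      by (simp only: F)
    also have "\<dots> = (fst w' ^ 2 * \<beta>') * z ^ 3"
      unfolding F' by algebra
    finally show ?thesis
      using \<open>fst w' ^ 2 * \<beta>' = 0\<close> by simp
  qed
  then have "hom_eval 3 c p = 0" for p
    by (cases p) simp
  then show False
    using section_dL_1_not_identically_0[OF assms(1)] by blast
qed

lemma E1_E2_cases:
  assumes "Q \<in> E1 \<union> E2"
  obtains w where "normP1 w" "Q = Ex1 w" | w where "normP1 w" "Q = Ex2 w"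
  using assms by (auto simp: E1_def E2_def)

lemma Ex_in_L12t_iff: "Ex1 w \<in> L12t \<longleftrightarrow> w = (1, 0)" "Ex2 w \<in> L12t \<longleftrightarrow> w = (1, 0)"
  by (auto simp: L12t_def)

lemma S2_cases:
  assumes "Q \<in> S2"
  obtains p where "Q = Pt p" | "Q \<in> E1 \<union> E2"
  using assms by (auto simp: S2_def E1_def E2_def)

lemma exists_section_mult_at_E1_E2:
  assumes "Q \<in> E1 \<union> E2" "d \<ge> 1"
  obtains c where "section_dL d c" "mult_ge d c Q (4 * d)"
proof -
  have cone: "section_dL d (cone_form d w) \<and> mult_ge d (cone_form d w) (Ex1 w) (4 * d)" if "normP1 w" for w
    using that assms(2) section_dL_cone_form mult_ge_cone_form by (auto simp: normP1_def)
  from assms(1) show ?thesis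
  proof (cases rule: E1_E2_cases)
    case (1 w)
    then show ?thesis using that cone by blast
  next
    case (2 w)
    then show ?thesis
      using that[of "swap_coeffs (cone_form d w)"] cone section_dL_swap_coeffs
        mult_ge_swap[of d "cone_form d w" "Ex1 w"] by auto
  qed
qed

lemma no_cubic_mult_5_off_L12:
  assumes "section_dL 1 c" "Q \<in> (E1 \<union> E2) - L12t"
  shows "\<not> mult_ge 1 c Q 5"
proof -
  from assms(2) have "Q \<in> E1 \<union> E2" by blast
  then show ?thesis
  proof (cases rule: E1_E2_cases)
    case (1 w)
    then show ?thesis
      using assms no_cubic_mult_5_Ex1_off_L12 by (auto simp: Ex_in_L12t_iff)
  next
    case (2 w)
    then show ?thesis
      using assms no_cubic_mult_5_Ex1_off_L12[OF section_dL_swap_coeffs[OF assms(1)]]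
        mult_ge_swap[of 1 "swap_coeffs c" "Ex1 w" 5] by (auto simp: Ex_in_L12t_iff)
  qed
qed

lemma z_cubed_mult_5_on_L12:
  assumes "Q \<in> (E1 \<union> E2) \<inter> L12t"
  shows "mult_ge 1 (cone_form 1 (1, 0)) Q 5"
proof -
  have "Q = Ex1 (1, 0) \<or> Q = Ex2 (1, 0)"
    using assms by (auto simp: E1_def E2_def Ex_in_L12t_iff)
  then show ?thesis
    using mult_ge_cone_form_L12[of 1] mult_ge_swap[of 1 "cone_form 1 (1, 0)" "Ex1 (1, 0)" 5]
    by (auto simp: swap_coeffs_cone_form_L12)
qed

lemma no_cubic_mult_4_two_points_Ex1:
  assumes "section_dL 1 c" "normP1 w" "w \<noteq> (1, 0)" "Q' \<in> E1 \<union> E2" "Q' \<noteq> Ex1 w"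
  shows "\<not> (mult_ge 1 c (Ex1 w) 4 \<and> mult_ge 1 c Q' 4)"
  using assms(4)
proof (cases rule: E1_E2_cases)
  case (1 w')
  then show ?thesis
    using no_cubic_mult_4_two_Ex1[OF assms(1,2) 1(1)] assms(5) by auto
next
  case (2 w')
  then show ?thesis
    using no_cubic_mult_4_Ex1_Ex2[OF assms(1,2) 2(1) assms(3)] by simp
qed

lemma no_cubic_mult_4_two_points:
  assumes "section_dL 1 c" "Q \<in> (E1 \<union> E2) - L12t" "Q' \<in> E1 \<union> E2" "Q' \<noteq> Q"
  shows "\<not> (mult_ge 1 c Q 4 \<and> mult_ge 1 c Q' 4)"
proof -
  from assms(2) have "Q \<in> E1 \<union> E2" by blast
  then show ?thesis
  proof (cases rule: E1_E2_cases)
    case (1 w)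
    then show ?thesis
      using no_cubic_mult_4_two_points_Ex1[OF assms(1)] assms by (auto simp: Ex_in_L12t_iff)
  next
    case (2 w)
    have "swap_pt Q' \<in> E1 \<union> E2" "swap_pt Q' \<noteq> Ex1 w"
      using assms(3,4) 2 by (auto simp: E1_def E2_def)
    then show ?thesis
      using no_cubic_mult_4_two_points_Ex1[OF section_dL_swap_coeffs[OF assms(1)], of w "swap_pt Q'"]
        mult_ge_swap[of 1 "swap_coeffs c" "Ex1 w" 4] mult_ge_swap[of 1 c Q' 4] assms(2) 2
      by (auto simp: Ex_in_L12t_iff)
  qed
qed

lemma single_point_if_cubic_mult_4_but_not_5:
  assumes "Z \<subseteq> S2" "section_dL 1 c" "\<forall>Q\<in>Z. mult_ge 1 c Q 4"
    and no5: "\<And>c'. section_dL 1 c' \<Longrightarrow> \<not> (\<forall>Q\<in>Z. mult_ge 1 c' Q 5)"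
  shows "\<exists>Q. Q \<in> (E1 \<union> E2) - L12t \<and> Z = {Q}"
proof -
  have E: "Z \<subseteq> E1 \<union> E2"
    using assms(1-3) no_cubic_mult_4_at_Pt by (fastforce elim: S2_cases)
  have "\<not> (\<forall>Q\<in>Z. mult_ge 1 (cone_form 1 (1, 0)) Q 5)"
    using no5 section_dL_cone_form[of "(1, 0)" 1] by simp
  then obtain Q where Q: "Q \<in> Z" "Q \<notin> L12t"
    using z_cubed_mult_5_on_L12 E by blast
  then have "Z = {Q}"
    using no_cubic_mult_4_two_points[OF assms(2)] assms(3) E by blast
  with Q E show ?thesis by blast
qed

lemma alpha_le:
  assumes "section_dL d c" "\<forall>Q\<in>Z. mult_ge d c Q m"
  shows "alpha m Z \<le> d"
  unfolding alpha_def using assms by (blast intro: Least_le)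

lemma alpha_attained_if_exists:
  assumes "section_dL d c" "\<forall>Q\<in>Z. mult_ge d c Q m"
  obtains c' where "section_dL (alpha m Z) c'" "\<forall>Q\<in>Z. mult_ge (alpha m Z) c' Q m"
proof -
  have "\<exists>c'. section_dL (alpha m Z) c' \<and> (\<forall>Q\<in>Z. mult_ge (alpha m Z) c' Q m)"
    unfolding alpha_def by (rule LeastI) (use assms in blast)
  with that show ?thesis by blast
qed

lemma alpha_eq_1:
  assumes "Z \<noteq> {}" "m \<ge> 1" "section_dL 1 c" "\<forall>Q\<in>Z. mult_ge 1 c Q m"
  shows "alpha m Z = 1"
proof -
  obtain c' where "section_dL (alpha m Z) c'" "\<forall>Q\<in>Z. mult_ge (alpha m Z) c' Q m"
    using alpha_attained_if_exists[OF assms(3,4)] .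
  then have "alpha m Z \<noteq> 0"
    using no_section_of_degree_0[OF _ assms(2)] assms(1) by fastforce
  then show ?thesis
    using alpha_le[OF assms(3,4)] by simp
qed

lemma alpha_gt_1:
  assumes "Z \<noteq> {}" "m \<ge> 1" "section_dL d c" "\<forall>Q\<in>Z. mult_ge d c Q m"
    and "\<And>c. section_dL 1 c \<Longrightarrow> \<not> (\<forall>Q\<in>Z. mult_ge 1 c Q m)"
  shows "alpha m Z > 1"
proof -
  obtain c' where "section_dL (alpha m Z) c'" "\<forall>Q\<in>Z. mult_ge (alpha m Z) c' Q m"
    using alpha_attained_if_exists[OF assms(3,4)] .
  then have "alpha m Z \<noteq> 0" "alpha m Z \<noteq> 1"
    using no_section_of_degree_0[OF _ assms(2)] assms(1,5) by fastforce+
  then show ?thesis by simp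
qed

text \<open>\<open>LEAST\<close> of an empty predicate is an unspecified number, so \<open>alpha m Z\<close> is only known to be
  attained if it differs from \<open>alpha m' Z\<close> for some \<open>m' \<ge> m\<close>.\<close>
lemma alpha_attained:
  assumes "alpha m Z \<noteq> alpha m' Z" "m \<le> m'"
  obtains c where "section_dL (alpha m Z) c" "\<forall>Q\<in>Z. mult_ge (alpha m Z) c Q m"
proof -
  have "\<exists>d c. section_dL d c \<and> (\<forall>Q\<in>Z. mult_ge d c Q m)"
  proof (rule ccontr)
    assume none: "\<not> ?thesis"
    then have "\<not> (\<exists>d c. section_dL d c \<and> (\<forall>Q\<in>Z. mult_ge d c Q m'))"
      using mult_ge_mono assms(2) by blast
    with none have "alpha m Z = alpha m' Z"
      unfolding alpha_def by metis
    with assms(1) show False ..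
  qed
  then show ?thesis
    using alpha_attained_if_exists that by blast
qed

theorem theorem4:
  fixes Z :: "s2pt set"
  assumes "finite Z" and "Z \<noteq> {}" and "Z \<subseteq> S2"
  shows "(\<exists>Q. Q \<in> (E1 \<union> E2) - L12t \<and> Z = {Q}) \<longleftrightarrow>
         (alpha 1 Z = 1 \<and> alpha 2 Z = 1 \<and> alpha 3 Z = 1 \<and> alpha 4 Z = 1 \<and> alpha 5 Z > 1)"
proof
  assume "\<exists>Q. Q \<in> (E1 \<union> E2) - L12t \<and> Z = {Q}"
  then obtain Q where Q: "Q \<in> (E1 \<union> E2) - L12t" and Z: "Z = {Q}" by blast
  obtain c where c: "section_dL 1 c" "mult_ge 1 c Q 4"
    using exists_section_mult_at_E1_E2[of Q 1] Q by auto
  obtain c' where c': "section_dL 2 c'" "mult_ge 2 c' Q 8"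
    using exists_section_mult_at_E1_E2[of Q 2] Q by auto
  have "alpha m Z = 1" if "1 \<le> m" "m \<le> 4" for m
    using alpha_eq_1[OF assms(2) that(1) c(1)] mult_ge_mono[OF c(2) that(2)] Z by blast
  moreover have "alpha 5 Z > 1"
    using alpha_gt_1[OF assms(2) _ c'(1)] mult_ge_mono[OF c'(2)] no_cubic_mult_5_off_L12[OF _ Q] Z
    by auto
  ultimately show "alpha 1 Z = 1 \<and> alpha 2 Z = 1 \<and> alpha 3 Z = 1 \<and> alpha 4 Z = 1 \<and> alpha 5 Z > 1"
    by simp
next
  assume alphas: "alpha 1 Z = 1 \<and> alpha 2 Z = 1 \<and> alpha 3 Z = 1 \<and> alpha 4 Z = 1 \<and> alpha 5 Z > 1"
  then obtain c where c: "section_dL 1 c" "\<forall>Q\<in>Z. mult_ge 1 c Q 4"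
    using alpha_attained[of 4 Z 5] by auto
  have "\<not> (\<forall>Q\<in>Z. mult_ge 1 c' Q 5)" if "section_dL 1 c'" for c'
    using alpha_le[OF that] alphas by fastforce
  with single_point_if_cubic_mult_4_but_not_5[OF assms(3) c]
  show "\<exists>Q. Q \<in> (E1 \<union> E2) - L12t \<and> Z = {Q}" by blast
qed

end
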